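(* Let $m\geq1$, $I\subseteq\{1,\dots,m\}$, $A\subseteq F_I(\Gamma^m)$ a basic Presburger set, and $X=\widehat A$. Then for every face $B=F_J(A)$ of $A$, its socle satisfies $\widehat B=F_{\widehat J}(\widehat A)$, which is a face of $X$ (where $\widehat J=J\setminus\{m\}$). If moreover $A$ is non-negative, then conversely for every face $Y$ of $X$ there is a face $B$ of $A$ such that $\widehat B=Y$; in that case $B=Y\times\{+\infty\}$ if $m\notin\mathrm{Supp}\,B$, and $B=(Y\times\mathcal{Z})\cap\overline A$ if $m\in\mathrm{Supp}\,B$.
   Context: $\mathcal{Z}$ is a $\mathbb{Z}$-group (linearly ordered abelian group with smallest positive element $1$, $|\mathcal{Z}/n\mathcal{Z}|=n$ for all $n\geq1$), $\mathcal{Q}$ its divisible hull, $\Gamma=\mathcal{Z}\cup\{+\infty\}$, $\Omega=\mathcal{Q}\cup\{+\infty\}$. Topology on $\Omega$ generated by open intervals and $]a,+\infty]$; product topology on $\Omega^m$; $\overline A$ is closure in $\Omega^m$ (resp. $\Omega^{m-1}$). Non-negative: all coordinates $\geq0$. $\mathrm{Supp}\,a=\{i:a_i\neq+\infty\}$, $F_I(\Gamma^m)=\{a\in\Gamma^m:\mathrm{Supp}\,a=I\}$, $F_J(A)=\{a\in\overline A:\mathrm{Supp}\,a=J\}$, called a face of $A$ when non-empty; all points of a face $B$ have the same support $\mathrm{Supp}\,B$. Socle: $\widehat a=(a_1,\dots,a_{m-1})$, $\widehat A=\{\widehat a:a\in A\}$. A basic Presburger set $A\subseteq F_I(\Gamma^m)$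 is the set of $x\in F_I(\Gamma^m)$ satisfying finitely many conditions $\varphi_l(x)\geq\gamma_l$ and $\psi_l(x)\equiv\rho_l\,[n_l]$, with $\varphi_l,\psi_l:x\mapsto\sum_{i\in I}c_ix_i$, $c_i\in\mathbb{Z}$, $\gamma_l\in\mathcal{Z}$, $0\le\rho_l<n_l$ integers, and $a\equiv b\,[n]$ meaning $a-b\in n\mathcal{Z}$. *)

theory Defs
  imports "HOL-Analysis.Analysis"
begin

text \<open>The Z-group is modelled as a subset Z of an ambient ordered field 'k,
  whose unit 1 is the smallest positive element of Z.  The element +\<infinity> is None.\<close>

definition zcong :: "'k::linordered_field set \<Rightarrow> nat \<Rightarrow> ('k \<times> 'k) set" where
  "zcong Z n = {(a, b). a \<in> Z \<and> b \<in> Z \<and> (\<exists>z\<in>Z. a - b = of_nat n * z)}"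

definition zgroup :: "'k::linordered_field set \<Rightarrow> bool" where
  "zgroup Z \<longleftrightarrow> 0 \<in> Z \<and> (\<forall>x\<in>Z. \<forall>y\<in>Z. x - y \<in> Z) \<and> 1 \<in> Z
     \<and> \<not> (\<exists>z\<in>Z. 0 < z \<and> z < 1)
     \<and> (\<forall>n::nat. n \<ge> 1 \<longrightarrow> card (Z // zcong Z n) = n)"

definition Qhull :: "'k::linordered_field set \<Rightarrow> 'k set" where
  "Qhull Z = {x. \<exists>n::nat. n \<ge> 1 \<and> of_nat n * x \<in> Z}"

definition Gamma :: "'k::linordered_field set \<Rightarrow> 'k option set" where
  "Gamma Z = Some ` Z \<union> {None}"

definition Omega :: "'k::linordered_field set \<Rightarrow> 'k option set" where
  "Omega Z = Some ` Qhull Z \<union> {None}"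

definition omega_top :: "'k::linordered_field set \<Rightarrow> 'k option topology" where
  "omega_top Z = topology_generated_by
     ({Some ` {x \<in> Qhull Z. a < x \<and> x < b} | a b. a \<in> Qhull Z \<and> b \<in> Qhull Z}
      \<union> {insert None (Some ` {x \<in> Qhull Z. a < x}) | a. a \<in> Qhull Z})"

definition omega_pow_top :: "'k::linordered_field set \<Rightarrow> nat \<Rightarrow> (nat \<Rightarrow> 'k option) topology" where
  "omega_pow_top Z m = product_topology (\<lambda>_. omega_top Z) {1..m}"

definition clos :: "'k::linordered_field set \<Rightarrow> nat \<Rightarrow> (nat \<Rightarrow> 'k option) set \<Rightarrow> (nat \<Rightarrow> 'k option) set" where
  "clos Z m A = omega_pow_top Z m closure_of A"

definition Gamma_pow :: "'k::linordered_field set \<Rightarrow> nat \<Rightarrow> (nat \<Rightarrow> 'k option) set" where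
  "Gamma_pow Z m = PiE {1..m} (\<lambda>_. Gamma Z)"

definition supp :: "nat \<Rightarrow> (nat \<Rightarrow> 'k option) \<Rightarrow> nat set" where
  "supp m a = {i \<in> {1..m}. a i \<noteq> None}"

definition F_Gamma :: "'k::linordered_field set \<Rightarrow> nat \<Rightarrow> nat set \<Rightarrow> (nat \<Rightarrow> 'k option) set" where
  "F_Gamma Z m I = {a \<in> Gamma_pow Z m. supp m a = I}"

definition F_face :: "'k::linordered_field set \<Rightarrow> nat \<Rightarrow> nat set \<Rightarrow> (nat \<Rightarrow> 'k option) set \<Rightarrow> (nat \<Rightarrow> 'k option) set" where
  "F_face Z m J A = {a \<in> clos Z m A. supp m a = J}"

definition is_face :: "'k::linordered_field set \<Rightarrow> nat \<Rightarrow> (nat \<Rightarrow> 'k option) set \<Rightarrow> (nat \<Rightarrow> 'k option) set \<Rightarrow> bool" where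
  "is_face Z m A B \<longleftrightarrow> (\<exists>J. B = F_face Z m J A) \<and> B \<noteq> {}"

definition socle :: "nat \<Rightarrow> (nat \<Rightarrow> 'k option) \<Rightarrow> (nat \<Rightarrow> 'k option)" where
  "socle m a = restrict a {1..m - 1}"

definition nonneg :: "nat \<Rightarrow> (nat \<Rightarrow> 'k::linordered_field option) set \<Rightarrow> bool" where
  "nonneg m A \<longleftrightarrow> (\<forall>a\<in>A. \<forall>i\<in>{1..m}. \<forall>v. a i = Some v \<longrightarrow> 0 \<le> v)"

definition linform :: "nat set \<Rightarrow> (nat \<Rightarrow> int) \<Rightarrow> (nat \<Rightarrow> 'k::linordered_field option) \<Rightarrow> 'k" where
  "linform I c x = (\<Sum>i\<in>I. of_int (c i) * the (x i))"

definition modZ :: "'k::linordered_field set \<Rightarrow> nat \<Rightarrow> 'k \<Rightarrow> 'k \<Rightarrow> bool" where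
  "modZ Z n a b \<longleftrightarrow> (\<exists>z\<in>Z. a - b = of_nat n * z)"

definition basic_presburger :: "'k::linordered_field set \<Rightarrow> nat \<Rightarrow> nat set \<Rightarrow> (nat \<Rightarrow> 'k option) set \<Rightarrow> bool" where
  "basic_presburger Z m I A \<longleftrightarrow>
    (\<exists>(ineqs :: ((nat \<Rightarrow> int) \<times> 'k) list) (congs :: ((nat \<Rightarrow> int) \<times> int \<times> nat) list).
       (\<forall>(c, g) \<in> set ineqs. g \<in> Z) \<and>
       (\<forall>(c, r, n) \<in> set congs. 0 \<le> r \<and> r < int n) \<and>
       A = {x \<in> F_Gamma Z m I.
              (\<forall>(c, g) \<in> set ineqs. linform I c x \<ge> g) \<and>
              (\<forall>(c, r, n) \<in> set congs. modZ Z n (linform I c x) (of_int r))})"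

end

theory Submission
  imports Defs
begin

text \<open>
  Since Z is discrete in its divisible hull, a point of the closure of \<open>A \<subseteq> \<Gamma>\<^sup>m\<close> is
  approached by points of \<open>A\<close> that agree with it on its finite coordinates and are arbitrarily
  large on the others.  For a basic Presburger set \<open>A\<close>, Farkas' lemma (proved by
  Fourier--Motzkin elimination) turns such unbounded families into an integral recession direction
  \<open>v\<close> of the inequalities, with \<open>v\<^sub>i \<ge> 1\<close> on the infinite coordinates; conversely, moving a
  point of \<open>A\<close> by multiples of \<open>N v\<close>, with \<open>N\<close> the product of the moduli, stays in \<open>A\<close>.  So
  the faces of \<open>A\<close> arise from points of \<open>A\<close> by sending the coordinates in the support of such a
  \<open>v\<close> to \<open>+\<infinity>\<close>, a description that commutes with forgetting the last coordinate.  For the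
  converse, non-negativity bounds the last coordinate of the approximating points from below, so
  the direction found for a face of the socle is either zero there, and the last coordinate stays
  finite, or positive, and it goes to \<open>+\<infinity>\<close>.
\<close>

lemma zgroup_zero: "zgroup Z \<Longrightarrow> 0 \<in> Z"
  and zgroup_one: "zgroup Z \<Longrightarrow> 1 \<in> Z"
  and zgroup_diff: "zgroup Z \<Longrightarrow> x \<in> Z \<Longrightarrow> y \<in> Z \<Longrightarrow> x - y \<in> Z"
  by (simp_all add: zgroup_def)

lemma zgroup_uminus: "zgroup Z \<Longrightarrow> x \<in> Z \<Longrightarrow> - x \<in> Z"
  using zgroup_diff[of Z 0 x] zgroup_zero[of Z] by simp

lemma zgroup_add: "zgroup Z \<Longrightarrow> x \<in> Z \<Longrightarrow> y \<in> Z \<Longrightarrow> x + y \<in> Z"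
  using zgroup_diff[of Z x "- y"] zgroup_uminus[of Z y] by simp

lemma zgroup_of_nat_mult: "zgroup Z \<Longrightarrow> x \<in> Z \<Longrightarrow> of_nat n * x \<in> Z"
  by (induction n) (auto simp: algebra_simps zgroup_zero zgroup_add)

lemma zgroup_of_int_mult:
  assumes "zgroup Z" "x \<in> Z" shows "of_int k * x \<in> Z"
proof (cases "0 \<le> k")
  case True
  then show ?thesis using zgroup_of_nat_mult[OF assms, of "nat k"] by simp
next
  case False
  then have "of_int k * x = - (of_nat (nat (- k)) * x)" by simp
  then show ?thesis using zgroup_uminus[OF assms(1) zgroup_of_nat_mult[OF assms]] by simp
qed

lemma zgroup_abs: "zgroup Z \<Longrightarrow> x \<in> Z \<Longrightarrow> \<bar>x\<bar> \<in> Z"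
  by (cases "0 \<le> x") (auto simp: zgroup_uminus)

lemma zgroup_sum: "zgroup Z \<Longrightarrow> (\<And>i. i \<in> F \<Longrightarrow> f i \<in> Z) \<Longrightarrow> sum f F \<in> Z"
  by (induction F rule: infinite_finite_induct) (auto simp: zgroup_zero zgroup_add)

lemma zgroup_abs_less_one:
  assumes "zgroup Z" "x \<in> Z" "\<bar>x\<bar> < 1" shows "x = 0"
proof -
  have "\<not> (0 < \<bar>x\<bar> \<and> \<bar>x\<bar> < 1)"
    using assms zgroup_abs[OF assms(1,2)] by (auto simp: zgroup_def)
  then show ?thesis using assms(3) by simp
qed

lemma zgroup_common_bound:
  assumes "zgroup Z" "finite F"
    and "\<And>i. i \<in> F \<Longrightarrow> \<exists>M\<in>Z. P i M"
    and "\<And>i M M'. P i M \<Longrightarrow> M \<le> M' \<Longrightarrow> P i M'"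
  shows "\<exists>M\<in>Z. \<forall>i\<in>F. P i M"
  using assms(2,3)
proof (induction F rule: finite_induct)
  case empty
  then show ?case using zgroup_zero[OF assms(1)] by auto
next
  case (insert j F)
  then obtain M1 M2 where "M1 \<in> Z" "\<forall>i\<in>F. P i M1" "M2 \<in> Z" "P j M2"
    by (metis insertCI)
  then show ?case using assms(4) by (intro bexI[of _ "max M1 M2"]) (auto simp: max_def)
qed

lemma subset_Qhull: "Z \<subseteq> Qhull Z"
  unfolding Qhull_def by (auto intro: exI[of _ 1])

lemma Qhull_add_diff:
  assumes Z: "zgroup Z" and "q \<in> Qhull Z" "r \<in> Qhull Z"
  shows "q + r \<in> Qhull Z" "q - r \<in> Qhull Z"
proof -
  obtain n k :: nat where "n \<ge> 1" "of_nat n * q \<in> Z" "k \<ge> 1" "of_nat k * r \<in> Z"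
    using assms(2,3) by (auto simp: Qhull_def)
  moreover have "n * k \<ge> 1" using \<open>n \<ge> 1\<close> \<open>k \<ge> 1\<close> by simp
  moreover have "of_nat (n * k) * (q + r) = of_nat k * (of_nat n * q) + of_nat n * (of_nat k * r)"
    and "of_nat (n * k) * (q - r) = of_nat k * (of_nat n * q) - of_nat n * (of_nat k * r)"
    by (simp_all add: algebra_simps)
  ultimately show "q + r \<in> Qhull Z" "q - r \<in> Qhull Z"
    unfolding Qhull_def using zgroup_add[OF Z] zgroup_diff[OF Z] zgroup_of_nat_mult[OF Z]
    by (metis (mono_tags, lifting) mem_Collect_eq)+
qed

lemma Qhull_le_zgroup:
  assumes "zgroup Z" "b \<in> Qhull Z" shows "\<exists>M\<in>Z. b \<le> M"
proof -
  obtain n :: nat where n: "n \<ge> 1" "of_nat n * b \<in> Z" using assms(2) by (auto simp: Qhull_def)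
  have "b \<le> of_nat n * \<bar>b\<bar>"
    using n(1) mult_right_mono[of 1 "of_nat n" "\<bar>b\<bar>"] by simp
  also have "\<dots> = \<bar>of_nat n * b\<bar>" by (simp add: abs_mult)
  finally show ?thesis using zgroup_abs[OF assms(1) n(2)] by blast
qed

text \<open>A Z-group is discrete in its divisible hull: if \<open>n q \<in> Z\<close>, then \<open>q\<close> is the only
  element of Z within distance \<open>1/n\<close> of \<open>q\<close>.\<close>

lemma zgroup_isolated_in_Qhull:
  assumes Z: "zgroup Z" and q: "q \<in> Qhull Z"
  obtains e where "e \<in> Qhull Z" "0 < e" "\<And>w. w \<in> Z \<Longrightarrow> q - e < w \<Longrightarrow> w < q + e \<Longrightarrow> w = q"
proof -
  obtain n :: nat where n: "n \<ge> 1" "of_nat n * q \<in> Z" using q by (auto simp: Qhull_def)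
  have "w = q" if w: "w \<in> Z" "q - 1 / of_nat n < w" "w < q + 1 / of_nat n" for w
  proof -
    have "\<bar>w - q\<bar> < 1 / of_nat n" using w(2,3) by auto
    then have "of_nat n * \<bar>w - q\<bar> < 1" using n(1) by (simp add: field_simps)
    then have "\<bar>of_nat n * w - of_nat n * q\<bar> < 1" by (simp add: abs_mult right_diff_distrib[symmetric])
    moreover have "of_nat n * w - of_nat n * q \<in> Z"
      using zgroup_diff[OF Z zgroup_of_nat_mult[OF Z w(1)] n(2)] .
    ultimately have "of_nat n * w - of_nat n * q = 0" using zgroup_abs_less_one[OF Z] by blast
    then show "w = q" using n(1) by (simp add: right_diff_distrib[symmetric])
  qed
  moreover have "1 / of_nat n \<in> Qhull Z"
    using n(1) zgroup_one[OF Z] unfolding Qhull_def by (intro CollectI exI[of _ n]) simp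
  ultimately show ?thesis using n(1) that by simp
qed

section \<open>Closures of subsets of \<open>\<Gamma>\<^sup>m\<close>\<close>

lemma Gamma_subset_Omega: "Gamma Z \<subseteq> Omega Z"
  unfolding Gamma_def Omega_def using subset_Qhull by blast

lemma openin_omega_interval:
  "a \<in> Qhull Z \<Longrightarrow> b \<in> Qhull Z \<Longrightarrow> openin (omega_top Z) (Some ` {x \<in> Qhull Z. a < x \<and> x < b})"
  unfolding omega_top_def by (rule topology_generated_by_Basis) blast

lemma openin_omega_tail:
  "a \<in> Qhull Z \<Longrightarrow> openin (omega_top Z) (insert None (Some ` {x \<in> Qhull Z. a < x}))"
  unfolding omega_top_def by (rule topology_generated_by_Basis) blast

lemma topspace_omega_top:
  assumes Z: "zgroup Z" shows "topspace (omega_top Z) = Omega Z"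
proof
  show "topspace (omega_top Z) \<subseteq> Omega Z"
    unfolding omega_top_def topology_generated_by_topspace Omega_def by auto
  have "None \<in> topspace (omega_top Z)"
    using openin_subset[OF openin_omega_tail[of 0 Z]] subset_Qhull zgroup_zero[OF Z] by blast
  moreover have "Some q \<in> topspace (omega_top Z)" if q: "q \<in> Qhull Z" for q
  proof -
    have "1 \<in> Qhull Z" using subset_Qhull zgroup_one[OF Z] by blast
    then have "openin (omega_top Z) (Some ` {x \<in> Qhull Z. q - 1 < x \<and> x < q + 1})"
      using Qhull_add_diff[OF Z q] by (intro openin_omega_interval) auto
    then show ?thesis using openin_subset q by force
  qed
  ultimately show "Omega Z \<subseteq> topspace (omega_top Z)" unfolding Omega_def by blast
qed

lemma topspace_omega_pow_top:
  "zgroup Z \<Longrightarrow> topspace (omega_pow_top Z m) = PiE {1..m} (\<lambda>_. Omega Z)"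
  by (simp add: omega_pow_top_def topspace_omega_top)

lemma omega_top_None_nbhd:
  assumes "openin (omega_top Z) U" "None \<in> U"
  shows "\<exists>b\<in>Qhull Z. \<forall>x\<in>Qhull Z. b < x \<longrightarrow> Some x \<in> U"
  using openin_topology_generated_by[OF assms(1)[unfolded omega_top_def]] assms(2)
proof (induction rule: generate_topology_on.induct)
  case (Int U V)
  then obtain b c where "b \<in> Qhull Z" "c \<in> Qhull Z"
    "\<forall>x\<in>Qhull Z. b < x \<longrightarrow> Some x \<in> U" "\<forall>x\<in>Qhull Z. c < x \<longrightarrow> Some x \<in> V" by auto
  then show ?case by (intro bexI[of _ "max b c"]) (auto simp: max_def)
next
  case (UN K)
  then show ?case by blast
qed auto

definition approximates :: "'k::linorder \<Rightarrow> 'k option \<Rightarrow> 'k option \<Rightarrow> bool" where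
  "approximates M y p \<longleftrightarrow> (p \<noteq> None \<longrightarrow> y = p) \<and> (\<forall>w. p = None \<longrightarrow> y = Some w \<longrightarrow> M < w)"

lemma approximates_mono: "approximates M' y p \<Longrightarrow> M \<le> M' \<Longrightarrow> approximates M y p"
  unfolding approximates_def by force

lemma omega_nbhd_of_approximants:
  assumes Z: "zgroup Z" and p: "p \<in> Omega Z" and M: "M \<in> Z"
  shows "\<exists>X. openin (omega_top Z) X \<and> p \<in> X \<and> (\<forall>y\<in>X \<inter> Gamma Z. approximates M y p)"
proof (cases p)
  case None
  have "openin (omega_top Z) (insert None (Some ` {x \<in> Qhull Z. M < x}))"
    using M subset_Qhull by (intro openin_omega_tail) blast
  then show ?thesis using None by (intro exI[of _ "insert None (Some ` {x \<in> Qhull Z. M < x})"])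
      (auto simp: approximates_def)
next
  case (Some q)
  then have q: "q \<in> Qhull Z" using p by (auto simp: Omega_def)
  obtain e where e: "e \<in> Qhull Z" "0 < e" "\<And>w. w \<in> Z \<Longrightarrow> q - e < w \<Longrightarrow> w < q + e \<Longrightarrow> w = q"
    using zgroup_isolated_in_Qhull[OF Z q] by blast
  have "openin (omega_top Z) (Some ` {x \<in> Qhull Z. q - e < x \<and> x < q + e})"
    using Qhull_add_diff[OF Z q e(1)] by (intro openin_omega_interval)
  then show ?thesis using Some q e
    by (intro exI[of _ "Some ` {x \<in> Qhull Z. q - e < x \<and> x < q + e}"])
      (auto simp: approximates_def Gamma_def)
qed

lemma omega_nbhd_contains_approximants:
  assumes Z: "zgroup Z" and X: "openin (omega_top Z) X" "p \<in> X"
  shows "\<exists>M\<in>Z. \<forall>y\<in>Gamma Z. approximates M y p \<longrightarrow> y \<in> X"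
proof (cases p)
  case None
  obtain b where b: "b \<in> Qhull Z" "\<forall>x\<in>Qhull Z. b < x \<longrightarrow> Some x \<in> X"
    using omega_top_None_nbhd[OF X(1)] X(2) None by blast
  obtain M where "M \<in> Z" "b \<le> M" using Qhull_le_zgroup[OF Z b(1)] by blast
  then show ?thesis using None X(2) b(2) subset_Qhull[of Z]
    by (intro bexI[of _ M]) (auto simp: approximates_def Gamma_def)
next
  case (Some q)
  then show ?thesis using X(2) zgroup_zero[OF Z] by (auto simp: approximates_def)
qed

lemma clos_subset_Omega_pow: "zgroup Z \<Longrightarrow> clos Z m S \<subseteq> PiE {1..m} (\<lambda>_. Omega Z)"
  unfolding clos_def using closure_of_subset_topspace topspace_omega_pow_top by metis

lemma clos_imp_approximable:
  assumes Z: "zgroup Z" and S: "S \<subseteq> Gamma_pow Z m" and a: "a \<in> clos Z m S" and M: "M \<in> Z"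
  shows "\<exists>x\<in>S. \<forall>i\<in>{1..m}. approximates M (x i) (a i)"
proof -
  have aT: "a \<in> PiE {1..m} (\<lambda>_. Omega Z)"
    using a clos_subset_Omega_pow[OF Z] by blast
  have "\<forall>i\<in>{1..m}. \<exists>X. openin (omega_top Z) X \<and> a i \<in> X
      \<and> (\<forall>y\<in>X \<inter> Gamma Z. approximates M y (a i))"
    using omega_nbhd_of_approximants[OF Z _ M] PiE_mem[OF aT] by blast
  from bchoice[OF this] obtain X where X: "\<forall>i\<in>{1..m}. openin (omega_top Z) (X i) \<and> a i \<in> X i
      \<and> (\<forall>y\<in>X i \<inter> Gamma Z. approximates M y (a i))" by blast
  have "openin (omega_pow_top Z m) (PiE {1..m} X)"
    unfolding omega_pow_top_def using X by (simp add: openin_PiE)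
  moreover have "a \<in> PiE {1..m} X" using aT X unfolding PiE_iff by blast
  ultimately obtain x where x: "x \<in> S" "x \<in> PiE {1..m} X"
    using a unfolding clos_def in_closure_of by blast
  have "x i \<in> X i \<inter> Gamma Z" if "i \<in> {1..m}" for i
    using PiE_mem[OF x(2) that] PiE_mem[OF subsetD[OF S x(1), unfolded Gamma_pow_def] that] by blast
  then show ?thesis using X x(1) by blast
qed

lemma approximable_imp_clos:
  assumes Z: "zgroup Z" and S: "S \<subseteq> Gamma_pow Z m" and aT: "a \<in> PiE {1..m} (\<lambda>_. Omega Z)"
    and approx: "\<And>M. M \<in> Z \<Longrightarrow> \<exists>x\<in>S. \<forall>i\<in>{1..m}. approximates M (x i) (a i)"
  shows "a \<in> clos Z m S"
  unfolding clos_def in_closure_of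
proof (intro conjI allI impI)
  show "a \<in> topspace (omega_pow_top Z m)" using aT topspace_omega_pow_top[OF Z] by simp
  fix T assume "a \<in> T \<and> openin (omega_pow_top Z m) T"
  then obtain X where X: "a \<in> PiE {1..m} X" "\<And>i. openin (omega_top Z) (X i)" "PiE {1..m} X \<subseteq> T"
    using product_topology_open_contains_basis[of "\<lambda>_. omega_top Z" "{1..m}" T a]
    unfolding omega_pow_top_def by blast
  have "\<exists>M\<in>Z. \<forall>i\<in>{1..m}. \<forall>y\<in>Gamma Z. approximates M y (a i) \<longrightarrow> y \<in> X i"
  proof (rule zgroup_common_bound[OF Z])
    show "\<exists>M\<in>Z. \<forall>y\<in>Gamma Z. approximates M y (a i) \<longrightarrow> y \<in> X i" if "i \<in> {1..m}" for i
      using omega_nbhd_contains_approximants[OF Z X(2) PiE_mem[OF X(1) that]] .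
  qed (simp, meson approximates_mono)
  then obtain M where M: "M \<in> Z"
    "\<forall>i\<in>{1..m}. \<forall>y\<in>Gamma Z. approximates M y (a i) \<longrightarrow> y \<in> X i" by blast
  obtain x where x: "x \<in> S" "\<forall>i\<in>{1..m}. approximates M (x i) (a i)"
    using approx[OF M(1)] by blast
  have xG: "x \<in> PiE {1..m} (\<lambda>_. Gamma Z)" using S x(1) unfolding Gamma_pow_def by blast
  have "x \<in> PiE {1..m} X"
  proof (rule PiE_I)
    show "x i \<in> X i" if "i \<in> {1..m}" for i using M(2) x(2) PiE_mem[OF xG that] that by blast
    show "x i = undefined" if "i \<notin> {1..m}" for i using PiE_arb[OF xG that] .
  qed
  then show "\<exists>y. y \<in> S \<and> y \<in> T" using x(1) X(3) by blast
qed

section \<open>Farkas' lemma by Fourier--Motzkin elimination\<close>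

definition lin_sum :: "'v set \<Rightarrow> ('v \<Rightarrow> int) \<Rightarrow> ('v \<Rightarrow> 'f::linordered_field) \<Rightarrow> 'f" where
  "lin_sum S c u = (\<Sum>i\<in>S. of_int (c i) * u i)"

definition satisfies :: "'v set \<Rightarrow> ('v \<Rightarrow> 'f::linordered_field) \<Rightarrow> ('v \<Rightarrow> int) \<times> int \<Rightarrow> bool" where
  "satisfies S u r \<longleftrightarrow> of_int (snd r) \<le> lin_sum S (fst r) u"

lemma lin_sum_add: "lin_sum S (\<lambda>i. c i + d i) u = lin_sum S c u + lin_sum S d u"
  unfolding lin_sum_def by (simp add: sum.distrib algebra_simps)

lemma lin_sum_scale: "lin_sum S (\<lambda>i. k * c i) u = of_int k * lin_sum S c u"
  unfolding lin_sum_def by (simp add: sum_distrib_left algebra_simps)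

lemma lin_sum_insert_update:
  assumes "finite S" "s \<notin> S"
  shows "lin_sum (insert s S) c (u(s := t)) = of_int (c s) * t + lin_sum S c u"
proof -
  have "lin_sum S c (u(s := t)) = lin_sum S c u"
    unfolding lin_sum_def using assms(2) by (intro sum.cong) auto
  then show ?thesis using assms unfolding lin_sum_def by simp
qed

inductive_set int_cone :: "(('v \<Rightarrow> int) \<times> int) set \<Rightarrow> (('v \<Rightarrow> int) \<times> int) set" for R where
  base: "r \<in> R \<Longrightarrow> r \<in> int_cone R"
| add: "(c, b) \<in> int_cone R \<Longrightarrow> (d, e) \<in> int_cone R \<Longrightarrow> (\<lambda>i. c i + d i, b + e) \<in> int_cone R"
| scale: "(c, b) \<in> int_cone R \<Longrightarrow> (\<lambda>i. int k * c i, int k * b) \<in> int_cone R"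

lemma int_cone_subset_int_cone:
  assumes "R' \<subseteq> int_cone R" shows "int_cone R' \<subseteq> int_cone R"
proof
  fix r assume "r \<in> int_cone R'"
  then show "r \<in> int_cone R"
  proof (induction rule: int_cone.induct)
    case (base r)
    then show ?case using assms by blast
  next
    case (add c b d e)
    show ?case using add.IH by (rule int_cone.add)
  next
    case (scale c b k)
    show ?case using scale.IH by (rule int_cone.scale)
  qed
qed

lemma int_cone_coeff_zero: "r \<in> int_cone R \<Longrightarrow> \<forall>q\<in>R. fst q s = 0 \<Longrightarrow> fst r s = 0"
  by (induction rule: int_cone.induct) auto

lemma exists_between_finite:
  fixes L U :: "'a::linorder set"
  assumes "finite L" "finite U" "\<And>l u. l \<in> L \<Longrightarrow> u \<in> U \<Longrightarrow> l \<le> u"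
  shows "\<exists>t. (\<forall>l\<in>L. l \<le> t) \<and> (\<forall>u\<in>U. t \<le> u)"
proof (cases "L = {}")
  case True
  show ?thesis
  proof (cases "U = {}")
    case False
    then show ?thesis using True assms(2) by (intro exI[of _ "Min U"]) auto
  qed (use True in auto)
next
  case False
  then show ?thesis using assms Max_in[of L] by (intro exI[of _ "Max L"]) auto
qed

definition combine :: "'v \<Rightarrow> ('v \<Rightarrow> int) \<times> int \<Rightarrow> ('v \<Rightarrow> int) \<times> int \<Rightarrow> ('v \<Rightarrow> int) \<times> int" where
  "combine s p n = (\<lambda>i. - fst n s * fst p i + fst p s * fst n i, - fst n s * snd p + fst p s * snd n)"

lemma lin_sum_combine:
  "lin_sum S (fst (combine s p n)) u
     = of_int (- fst n s) * lin_sum S (fst p) u + of_int (fst p s) * lin_sum S (fst n) u"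
  unfolding combine_def fst_conv lin_sum_add lin_sum_scale ..

text \<open>The bound on the eliminated variable coming from \<open>p\<close> lies below the one coming from \<open>n\<close>.\<close>

lemma combine_separates:
  fixes u :: "'v \<Rightarrow> 'f::linordered_field"
  assumes "satisfies S u (combine s p n)" and x: "0 < fst p s" and y: "fst n s < 0"
  shows "(of_int (snd p) - lin_sum S (fst p) u) / of_int (fst p s)
           \<le> (lin_sum S (fst n) u - of_int (snd n)) / of_int (- fst n s)"
proof -
  have x: "(0::'f) < of_int (fst p s)" and y: "(0::'f) < of_int (- fst n s)" using x y by simp_all
  have "(of_int (snd p) - lin_sum S (fst p) u) * of_int (- fst n s)
      \<le> (lin_sum S (fst n) u - of_int (snd n)) * of_int (fst p s)"
    using assms(1) unfolding satisfies_def lin_sum_combine by (simp add: combine_def algebra_simps)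
  then have "of_int (snd p) - lin_sum S (fst p) u
      \<le> (lin_sum S (fst n) u - of_int (snd n)) * of_int (fst p s) / of_int (- fst n s)"
    unfolding pos_le_divide_eq[OF y] .
  then show ?thesis unfolding pos_divide_le_eq[OF x] times_divide_eq_left .
qed

definition eliminate :: "'v \<Rightarrow> (('v \<Rightarrow> int) \<times> int) set \<Rightarrow> (('v \<Rightarrow> int) \<times> int) set" where
  "eliminate s R = {r \<in> R. fst r s = 0}
     \<union> {combine s p n | p n. p \<in> R \<and> n \<in> R \<and> 0 < fst p s \<and> fst n s < 0}"

lemma finite_eliminate:
  assumes "finite R" shows "finite (eliminate s R)"
proof -
  have "eliminate s R \<subseteq> R \<union> (\<lambda>(p, n). combine s p n) ` (R \<times> R)"
    unfolding eliminate_def by auto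
  moreover have "finite (R \<union> (\<lambda>(p, n). combine s p n) ` (R \<times> R))" using assms by simp
  ultimately show ?thesis by (rule finite_subset)
qed

lemma eliminate_coeff_zero: "r \<in> eliminate s R \<Longrightarrow> fst r s = 0"
  unfolding eliminate_def combine_def by auto

lemma eliminate_subset_int_cone: "eliminate s R \<subseteq> int_cone R"
proof
  fix r assume "r \<in> eliminate s R"
  then consider "r \<in> R" | p n where "p \<in> R" "n \<in> R" "0 < fst p s" "fst n s < 0" "r = combine s p n"
    unfolding eliminate_def by blast
  then show "r \<in> int_cone R"
  proof cases
    case 2
    obtain c b d e where pn: "p = (c, b)" "n = (d, e)" by fastforce
    have "(\<lambda>i. int (nat (- d s)) * c i, int (nat (- d s)) * b) \<in> int_cone R"
      and "(\<lambda>i. int (nat (c s)) * d i, int (nat (c s)) * e) \<in> int_cone R"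
      using int_cone.scale[OF int_cone.base] 2 pn by blast+
    from int_cone.add[OF this] show ?thesis using 2 pn by (simp add: combine_def)
  qed (rule int_cone.base)
qed

lemma satisfies_insert_update:
  assumes "finite S" "s \<notin> S"
  shows "satisfies (insert s S) (u(s := t)) r
           \<longleftrightarrow> of_int (snd r) - lin_sum S (fst r) u \<le> of_int (fst r s) * t"
  unfolding satisfies_def lin_sum_insert_update[OF assms] by (rule iffI) linarith+

text \<open>One step of Fourier--Motzkin elimination: the value of the eliminated variable is squeezed
  between the lower bounds coming from positive and the upper bounds coming from negative
  coefficients.\<close>

lemma eliminate_solution_extends:
  fixes u :: "'v \<Rightarrow> 'f::linordered_field"
  assumes S: "finite S" "s \<notin> S" and "finite R" and u: "\<forall>r\<in>eliminate s R. satisfies S u r"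
  shows "\<exists>t. \<forall>r\<in>R. satisfies (insert s S) (u(s := t)) r"
proof -
  define P where "P = {r \<in> R. 0 < fst r s}"
  define N where "N = {r \<in> R. fst r s < 0}"
  define lower where "lower p = (of_int (snd p) - lin_sum S (fst p) u) / of_int (fst p s)" for p
  define upper where "upper n = (lin_sum S (fst n) u - of_int (snd n)) / of_int (- fst n s)" for n
  have "finite P" "finite N" using \<open>finite R\<close> by (simp_all add: P_def N_def)
  have "\<exists>t. (\<forall>l\<in>lower ` P. l \<le> t) \<and> (\<forall>v\<in>upper ` N. t \<le> v)"
  proof (rule exists_between_finite)
    show "finite (lower ` P)" "finite (upper ` N)" using \<open>finite P\<close> \<open>finite N\<close> by simp_all
    show "l \<le> v" if lv: "l \<in> lower ` P" "v \<in> upper ` N" for l v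
    proof -
      obtain p n where pn: "p \<in> R" "0 < fst p s" "n \<in> R" "fst n s < 0" "l = lower p" "v = upper n"
        using lv unfolding P_def N_def by blast
      then have "combine s p n \<in> eliminate s R" unfolding eliminate_def by blast
      then have "lower p \<le> upper n"
        unfolding lower_def upper_def by (rule combine_separates[OF bspec[OF u] pn(2,4)])
      then show ?thesis using pn(5,6) by simp
    qed
  qed
  then obtain t where t: "\<forall>p\<in>P. lower p \<le> t" "\<forall>n\<in>N. t \<le> upper n" by blast
  have "of_int (snd r) - lin_sum S (fst r) u \<le> of_int (fst r s) * t" if r: "r \<in> R" for r
  proof -
    consider "fst r s = 0" | "0 < fst r s" | "fst r s < 0" by linarith
    then show ?thesis
    proof cases
      case 1
      then have "r \<in> eliminate s R" using r unfolding eliminate_def by blast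
      then show ?thesis using u 1 unfolding satisfies_def by simp
    next
      case 2
      then have "(0::'f) < of_int (fst r s)" "r \<in> P" using r unfolding P_def by simp_all
      then show ?thesis using t(1) pos_divide_le_eq unfolding lower_def by (metis mult.commute)
    next
      case 3
      then have "(0::'f) < of_int (- fst r s)" "r \<in> N" using r unfolding N_def by simp_all
      then have "t * of_int (- fst r s) \<le> lin_sum S (fst r) u - of_int (snd r)"
        using t(2) pos_le_divide_eq unfolding upper_def by blast
      then show ?thesis by (simp add: algebra_simps)
    qed
  qed
  then show ?thesis unfolding satisfies_insert_update[OF S] by blast
qed

lemma farkas_int_cone:
  assumes "finite S" "finite R" "\<not> (\<exists>u::'v \<Rightarrow> 'f::linordered_field. \<forall>r\<in>R. satisfies S u r)"
  shows "\<exists>c b. (c, b) \<in> int_cone R \<and> (\<forall>i\<in>S. c i = 0) \<and> 0 < b"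
  using assms
proof (induction S arbitrary: R rule: finite_induct)
  case empty
  then obtain r where "r \<in> R" "\<not> satisfies {} (\<lambda>_. 0::'f) r" by blast
  then show ?case using int_cone.base[of r R] unfolding satisfies_def lin_sum_def
    by (intro exI[of _ "fst r"] exI[of _ "snd r"]) simp
next
  case (insert s S)
  have "\<not> (\<exists>u::'v \<Rightarrow> 'f. \<forall>r\<in>eliminate s R. satisfies S u r)"
    using eliminate_solution_extends[OF insert.hyps insert.prems(1)] insert.prems(2) by blast
  then obtain c b where cb: "(c, b) \<in> int_cone (eliminate s R)" "\<forall>i\<in>S. c i = 0" "0 < b"
    using insert.IH[OF finite_eliminate[OF insert.prems(1)]] by blast
  have "\<forall>q\<in>eliminate s R. fst q s = 0" by (simp add: eliminate_coeff_zero)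
  then have "c s = 0" using int_cone_coeff_zero[OF cb(1)] by simp
  moreover have "(c, b) \<in> int_cone R"
    using subsetD[OF int_cone_subset_int_cone[OF eliminate_subset_int_cone] cb(1)] .
  ultimately show ?case using cb(2,3) by (intro exI[of _ c] exI[of _ b]) simp
qed

section \<open>Integral directions of unbounded polyhedra\<close>

definition unit_coeffs :: "'v \<Rightarrow> 'v \<Rightarrow> int" where
  "unit_coeffs i = (\<lambda>j. if j = i then 1 else 0)"

lemma lin_sum_unit_coeffs:
  assumes "finite S" "i \<in> S" shows "lin_sum S (unit_coeffs i) u = u i"
proof -
  have "lin_sum S (unit_coeffs i) u = (\<Sum>j\<in>S. if j = i then u j else 0)"
    unfolding lin_sum_def unit_coeffs_def by (rule sum.cong) simp_all
  then show ?thesis using assms by (simp add: sum.delta')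
qed

definition feasible_beyond ::
    "'v set \<Rightarrow> 'v set \<Rightarrow> (('v \<Rightarrow> int) \<times> 'k) set \<Rightarrow> 'k \<Rightarrow> ('v \<Rightarrow> 'k::linordered_field) \<Rightarrow> bool" where
  "feasible_beyond W T G M u \<longleftrightarrow> (\<forall>i\<in>W. M \<le> u i) \<and> (\<forall>i\<in>T. 0 \<le> u i)
     \<and> (\<forall>(c, g)\<in>G. g \<le> lin_sum (W \<union> T) c u)"

text \<open>The homogeneous system whose solutions are the directions along which the region of
  \<^const>\<open>feasible_beyond\<close> is unbounded in every coordinate of \<open>W\<close>.\<close>

definition recession_system ::
    "'v set \<Rightarrow> 'v set \<Rightarrow> (('v \<Rightarrow> int) \<times> 'k) set \<Rightarrow> (('v \<Rightarrow> int) \<times> int) set" where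
  "recession_system W T G = (\<lambda>i. (unit_coeffs i, 1)) ` W \<union> (\<lambda>i. (unit_coeffs i, 0)) ` T
     \<union> (\<lambda>(c, g). (c, 0)) ` G"

definition holds_beyond ::
    "'v set \<Rightarrow> 'v set \<Rightarrow> (('v \<Rightarrow> int) \<times> 'k) set \<Rightarrow> 'k::linordered_field \<Rightarrow> ('v \<Rightarrow> int) \<times> int \<Rightarrow> bool" where
  "holds_beyond W T G K r \<longleftrightarrow> (\<forall>M u. 0 \<le> M \<longrightarrow> feasible_beyond W T G M u
     \<longrightarrow> of_int (snd r) * M + K \<le> lin_sum (W \<union> T) (fst r) u)"

lemma holds_beyond_add:
  assumes "holds_beyond W T G K (c, b)" "holds_beyond W T G L (d, e)"
  shows "holds_beyond W T G (K + L) (\<lambda>i. c i + d i, b + e)"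
  unfolding holds_beyond_def
proof (intro allI impI)
  fix M u assume "0 \<le> M" "feasible_beyond W T G M u"
  then have "of_int b * M + K \<le> lin_sum (W \<union> T) c u" "of_int e * M + L \<le> lin_sum (W \<union> T) d u"
    using assms unfolding holds_beyond_def by auto
  then show "of_int (snd (\<lambda>i. c i + d i, b + e)) * M + (K + L) \<le> lin_sum (W \<union> T) (fst (\<lambda>i. c i + d i, b + e)) u"
    unfolding fst_conv snd_conv lin_sum_add of_int_add distrib_right by linarith
qed

lemma holds_beyond_scale:
  assumes "holds_beyond W T G K (c, b)"
  shows "holds_beyond W T G (of_nat k * K) (\<lambda>i. int k * c i, int k * b)"
  unfolding holds_beyond_def
proof (intro allI impI)
  fix M u assume "0 \<le> M" "feasible_beyond W T G M u"
  then have "of_nat k * (of_int b * M + K) \<le> of_nat k * lin_sum (W \<union> T) c u"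
    using assms unfolding holds_beyond_def by (intro mult_left_mono) auto
  then show "of_int (snd (\<lambda>i. int k * c i, int k * b)) * M + of_nat k * K
      \<le> lin_sum (W \<union> T) (fst (\<lambda>i. int k * c i, int k * b)) u"
    unfolding fst_conv snd_conv lin_sum_scale by (simp add: algebra_simps)
qed

lemma holds_beyond_recession_system:
  fixes G :: "(('v \<Rightarrow> int) \<times> 'k::linordered_field) set"
  assumes Z: "zgroup Z" and fin: "finite W" "finite T" and GZ: "\<forall>(c, g)\<in>G. g \<in> Z"
    and r: "r \<in> recession_system W T G"
  shows "\<exists>K\<in>Z. holds_beyond W T G K r"
proof -
  have unit: "lin_sum (W \<union> T) (unit_coeffs i) u = u i" if "i \<in> W \<union> T" for i and u :: "'v \<Rightarrow> 'k"
    using lin_sum_unit_coeffs[of "W \<union> T" i u] fin that by simp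
  from r consider i where "i \<in> W" "r = (unit_coeffs i, 1)" | i where "i \<in> T" "r = (unit_coeffs i, 0)"
    | c g where "(c, g) \<in> G" "r = (c, 0)"
    unfolding recession_system_def by auto
  then show ?thesis
  proof cases
    case 1
    then show ?thesis using unit zgroup_zero[OF Z]
      by (intro bexI[of _ 0]) (simp_all add: holds_beyond_def feasible_beyond_def)
  next
    case 2
    then show ?thesis using unit zgroup_zero[OF Z]
      by (intro bexI[of _ 0]) (simp_all add: holds_beyond_def feasible_beyond_def)
  next
    case 3
    then have "holds_beyond W T G g r" unfolding holds_beyond_def feasible_beyond_def by fastforce
    then show ?thesis using 3 GZ by blast
  qed
qed

lemma int_cone_recession_system_holds_beyond:
  fixes G :: "(('v \<Rightarrow> int) \<times> 'k::linordered_field) set"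
  assumes Z: "zgroup Z" and fin: "finite W" "finite T" and GZ: "\<forall>(c, g)\<in>G. g \<in> Z"
    and r: "r \<in> int_cone (recession_system W T G)"
  shows "\<exists>K\<in>Z. holds_beyond W T G K r"
  using r
proof (induction rule: int_cone.induct)
  case (base r)
  then show ?case by (rule holds_beyond_recession_system[OF Z fin GZ])
next
  case (add c b d e)
  then show ?case using holds_beyond_add zgroup_add[OF Z] by blast
next
  case (scale c b k)
  then show ?case using holds_beyond_scale zgroup_of_nat_mult[OF Z] by blast
qed

lemma recession_system_solvable:
  fixes G :: "(('v \<Rightarrow> int) \<times> 'k::linordered_field) set"
  assumes Z: "zgroup Z" and fin: "finite W" "finite T" "finite G" and GZ: "\<forall>(c, g)\<in>G. g \<in> Z"
    and unbounded: "\<forall>M\<in>Z. \<exists>u. feasible_beyond W T G M u"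
  shows "\<exists>u::'v \<Rightarrow> rat. \<forall>r\<in>recession_system W T G. satisfies (W \<union> T) u r"
proof (rule ccontr)
  assume "\<nexists>u::'v \<Rightarrow> rat. \<forall>r\<in>recession_system W T G. satisfies (W \<union> T) u r"
  moreover have "finite (recession_system W T G)" using fin by (simp add: recession_system_def)
  ultimately obtain c b where cb: "(c, b) \<in> int_cone (recession_system W T G)"
    "\<forall>i\<in>W \<union> T. c i = 0" "0 < b"
    using farkas_int_cone[of "W \<union> T"] fin by blast
  obtain K where K: "K \<in> Z" "holds_beyond W T G K (c, b)"
    using int_cone_recession_system_holds_beyond[OF Z fin(1,2) GZ cb(1)] by blast
  define M where "M = \<bar>K\<bar> + 1"
  have "M \<in> Z" unfolding M_def using zgroup_add[OF Z zgroup_abs[OF Z K(1)] zgroup_one[OF Z]] .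
  then obtain u where "feasible_beyond W T G M u" using unbounded by blast
  moreover have "0 \<le> M" unfolding M_def by simp
  ultimately have "of_int b * M + K \<le> lin_sum (W \<union> T) c u" using K(2) unfolding holds_beyond_def by auto
  also have "lin_sum (W \<union> T) c u = 0" unfolding lin_sum_def using cb(2) by simp
  finally have "of_int b * M + K \<le> 0" .
  moreover have "M \<le> of_int b * M"
    using cb(3) \<open>0 \<le> M\<close> mult_right_mono[of 1 "of_int b" M] by simp
  ultimately show False unfolding M_def by linarith
qed

lemma rat_common_denominator:
  fixes v :: "'v \<Rightarrow> rat"
  assumes "finite S"
  shows "\<exists>D::int. 1 \<le> D \<and> (\<exists>w. \<forall>i\<in>S. of_int (w i) = of_int D * v i)"
proof -
  define num where "num i = fst (quotient_of (v i))" for i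
  define den where "den i = snd (quotient_of (v i))" for i
  have v: "v i = of_int (num i) / of_int (den i)" for i
    unfolding num_def den_def by (simp add: quotient_of_div prod.case_eq_if)
  have den_pos: "0 < den i" for i
    unfolding den_def using quotient_of_denom_pos' by simp
  define D where "D = (\<Prod>i\<in>S. den i)"
  have "of_int (num i * (\<Prod>j\<in>S - {i}. den j)) = of_int D * v i" if "i \<in> S" for i
  proof -
    have "D = den i * (\<Prod>j\<in>S - {i}. den j)"
      unfolding D_def using assms that by (simp add: prod.remove)
    then show ?thesis unfolding v using den_pos[of i] by (simp add: field_simps)
  qed
  moreover have "1 \<le> D" unfolding D_def using den_pos by (simp add: int_one_le_iff_zero_less prod_pos)
  ultimately show ?thesis by (intro exI[of _ D] conjI exI[of _ "\<lambda>i. num i * (\<Prod>j\<in>S - {i}. den j)"]) auto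
qed

text \<open>Were there no such direction, Farkas' lemma would give a non-negative combination of the
  inequalities bounding a coordinate in \<open>W\<close> from above; a rational direction is made integral by
  clearing denominators.\<close>

lemma integral_recession_direction:
  fixes G :: "(('v \<Rightarrow> int) \<times> 'k::linordered_field) set"
  assumes Z: "zgroup Z" and fin: "finite W" "finite T" "finite G" and GZ: "\<forall>(c, g)\<in>G. g \<in> Z"
    and unbounded: "\<forall>M\<in>Z. \<exists>u. feasible_beyond W T G M u"
  shows "\<exists>v::'v \<Rightarrow> int. (\<forall>i\<in>W. 1 \<le> v i) \<and> (\<forall>i\<in>T. 0 \<le> v i)
           \<and> (\<forall>(c, g)\<in>G. 0 \<le> (\<Sum>i\<in>W \<union> T. c i * v i))"
proof -
  let ?S = "W \<union> T"
  obtain u :: "'v \<Rightarrow> rat" where u: "\<forall>r\<in>recession_system W T G. satisfies ?S u r"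
    using recession_system_solvable[OF assms] by blast
  obtain D w where Dw: "1 \<le> D" "\<forall>i\<in>?S. of_int (w i) = of_int D * u i"
    using rat_common_denominator[of ?S u] fin by blast
  have "1 \<le> w i" if "i \<in> W" for i
  proof -
    have "satisfies ?S u (unit_coeffs i, 1)" using u that unfolding recession_system_def by blast
    then have "1 \<le> u i" using lin_sum_unit_coeffs[of ?S i u] fin that by (simp add: satisfies_def)
    then have "(1::rat) * 1 \<le> of_int D * u i" using Dw(1) by (intro mult_mono) simp_all
    then have "(1::rat) \<le> of_int (w i)" using Dw(2) that by simp
    then show ?thesis by simp
  qed
  moreover have "0 \<le> w i" if "i \<in> T" for i
  proof -
    have "satisfies ?S u (unit_coeffs i, 0)" using u that unfolding recession_system_def by blast
    then have "0 \<le> u i" using lin_sum_unit_coeffs[of ?S i u] fin that by (simp add: satisfies_def)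
    then have "(0::rat) \<le> of_int (w i)" using Dw that by simp
    then show ?thesis by simp
  qed
  moreover have "0 \<le> (\<Sum>i\<in>?S. c i * w i)" if "(c, g) \<in> G" for c g
  proof -
    have "satisfies ?S u (c, 0)" using u that unfolding recession_system_def by force
    then have "0 \<le> of_int D * lin_sum ?S c u" using Dw(1) by (simp add: satisfies_def)
    also have "of_int D * lin_sum ?S c u = of_int (\<Sum>i\<in>?S. c i * w i)"
      using Dw(2) by (simp add: lin_sum_def sum_distrib_left algebra_simps)
    finally show ?thesis by (simp only: of_int_0_le_iff)
  qed
  ultimately show ?thesis by (intro exI[of _ w]) auto
qed

lemma clos_coord_in_zgroup:
  assumes Z: "zgroup Z" and S: "S \<subseteq> Gamma_pow Z m"
    and a: "a \<in> clos Z m S" and i: "i \<in> {1..m}" "a i = Some q"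
  shows "q \<in> Z"
proof -
  obtain x where x: "x \<in> S" "\<forall>i\<in>{1..m}. approximates 0 (x i) (a i)"
    using clos_imp_approximable[OF Z S a zgroup_zero[OF Z]] by blast
  then have "x i = Some q" using i unfolding approximates_def by simp
  moreover have "x i \<in> Gamma Z" using S x(1) i unfolding Gamma_pow_def by (metis PiE_mem subsetD)
  ultimately show ?thesis unfolding Gamma_def by auto
qed

lemma supp_clos_subset:
  assumes Z: "zgroup Z" and S: "S \<subseteq> Gamma_pow Z m" and K: "\<And>x. x \<in> S \<Longrightarrow> supp m x \<subseteq> K"
    and a: "a \<in> clos Z m S"
  shows "supp m a \<subseteq> K"
proof
  fix i assume "i \<in> supp m a"
  then have i: "i \<in> {1..m}" "a i \<noteq> None" unfolding supp_def by auto
  obtain x where x: "x \<in> S" "\<forall>i\<in>{1..m}. approximates 0 (x i) (a i)"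
    using clos_imp_approximable[OF Z S a zgroup_zero[OF Z]] by blast
  then have "x i \<noteq> None" using i unfolding approximates_def by auto
  then show "i \<in> K" using K[OF x(1)] i(1) unfolding supp_def by blast
qed

lemma socle_PiE: "x \<in> PiE {1..m} (\<lambda>_. B) \<Longrightarrow> socle m x \<in> PiE {1..m - 1} (\<lambda>_. B)"
  unfolding socle_def by (auto simp: PiE_iff)

lemma socle_image_Gamma_pow:
  assumes "S \<subseteq> Gamma_pow Z m" shows "socle m ` S \<subseteq> Gamma_pow Z (m - 1)"
proof (rule image_subsetI)
  fix x assume "x \<in> S"
  then have "x \<in> PiE {1..m} (\<lambda>_. Gamma Z)" using assms unfolding Gamma_pow_def by blast
  then show "socle m x \<in> Gamma_pow Z (m - 1)" unfolding Gamma_pow_def by (rule socle_PiE)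
qed

lemma supp_socle: "supp (m - 1) (socle m a) = supp m a - {m}"
  unfolding supp_def socle_def by auto

lemma socle_in_clos:
  assumes Z: "zgroup Z" and S: "S \<subseteq> Gamma_pow Z m" and a: "a \<in> clos Z m S"
  shows "socle m a \<in> clos Z (m - 1) (socle m ` S)"
proof (rule approximable_imp_clos[OF Z socle_image_Gamma_pow[OF S]])
  show "socle m a \<in> PiE {1..m - 1} (\<lambda>_. Omega Z)"
    using socle_PiE subsetD[OF clos_subset_Omega_pow[OF Z] a] .
  fix M assume "M \<in> Z"
  then obtain x where "x \<in> S" "\<forall>i\<in>{1..m}. approximates M (x i) (a i)"
    using clos_imp_approximable[OF Z S a] by blast
  then show "\<exists>y\<in>socle m ` S. \<forall>i\<in>{1..m - 1}. approximates M (y i) (socle m a i)"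
    by (intro bexI[of _ "socle m x"]) (auto simp: socle_def)
qed

lemma socle_F_face_subset:
  assumes "zgroup Z" "S \<subseteq> Gamma_pow Z m"
  shows "socle m ` F_face Z m J S \<subseteq> F_face Z (m - 1) (J - {m}) (socle m ` S)"
  using socle_in_clos[OF assms] supp_socle unfolding F_face_def by blast

lemma socle_fun_upd_last: "a \<in> extensional {1..m} \<Longrightarrow> (socle m a)(m := a m) = a"
  unfolding socle_def by (rule ext) (auto simp: extensional_def)

lemma F_face_last_None:
  assumes Z: "zgroup Z" and "1 \<le> m" "m \<notin> J"
  shows "F_face Z m J S = (\<lambda>y. y(m := None)) ` socle m ` F_face Z m J S"
proof -
  have "(socle m a)(m := None) = a" if "a \<in> F_face Z m J S" for a
  proof -
    have "a \<in> extensional {1..m}"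
      using that clos_subset_Omega_pow[OF Z, of m S] unfolding F_face_def PiE_def by blast
    moreover have "a m = None" using that assms(2,3) unfolding F_face_def supp_def by auto
    ultimately show ?thesis using socle_fun_upd_last by metis
  qed
  then show ?thesis by (auto simp: image_image)
qed

lemma F_face_last_finite:
  assumes Z: "zgroup Z" and S: "S \<subseteq> Gamma_pow Z m" and "1 \<le> m" "m \<in> J"
  shows "F_face Z m J S = {y(m := Some z) | y z. y \<in> socle m ` F_face Z m J S \<and> z \<in> Z} \<inter> clos Z m S"
proof (intro set_eqI iffI)
  fix a assume a: "a \<in> F_face Z m J S"
  then obtain q where q: "a m = Some q"
    using assms(3,4) unfolding F_face_def supp_def by auto
  have "a \<in> clos Z m S" using a unfolding F_face_def by blast
  moreover have "m \<in> {1..m}" using assms(3) by simp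
  ultimately have "q \<in> Z" using clos_coord_in_zgroup[OF Z S] q by blast
  moreover have "a \<in> extensional {1..m}"
    using clos_subset_Omega_pow[OF Z, of m S] \<open>a \<in> clos Z m S\<close> unfolding PiE_def by blast
  then have "a = (socle m a)(m := Some q)" using socle_fun_upd_last[of a m] q by simp
  ultimately show "a \<in> {y(m := Some z) | y z. y \<in> socle m ` F_face Z m J S \<and> z \<in> Z} \<inter> clos Z m S"
    using a \<open>a \<in> clos Z m S\<close> by blast
next
  fix p assume "p \<in> {y(m := Some z) | y z. y \<in> socle m ` F_face Z m J S \<and> z \<in> Z} \<inter> clos Z m S"
  then obtain a z where p: "p = (socle m a)(m := Some z)" "a \<in> F_face Z m J S" "p \<in> clos Z m S"
    by blast
  have "a m \<noteq> None" using assms(3,4) p(2) unfolding F_face_def supp_def by auto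
  then have "p i \<noteq> None \<longleftrightarrow> a i \<noteq> None" if "i \<in> {1..m}" for i
    using that p(1) unfolding socle_def by (cases "i = m") auto
  then have "supp m p = supp m a" unfolding supp_def by auto
  then show "p \<in> F_face Z m J S" using p(2,3) unfolding F_face_def by blast
qed

section \<open>Faces of a basic Presburger set\<close>

locale basic_presburger_set =
  fixes Z :: "'k::linordered_field set" and m :: nat and I :: "nat set"
    and ineqs :: "((nat \<Rightarrow> int) \<times> 'k) list" and congs :: "((nat \<Rightarrow> int) \<times> int \<times> nat) list"
    and A :: "(nat \<Rightarrow> 'k option) set"
  assumes zgroup: "zgroup Z" and I_subset: "I \<subseteq> {1..m}"
    and ineqs_in_zgroup: "\<forall>(c, g) \<in> set ineqs. g \<in> Z"
    and congs_range: "\<forall>(c, r, n) \<in> set congs. 0 \<le> r \<and> r < int n"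
    and A_eq: "A = {x \<in> F_Gamma Z m I.
              (\<forall>(c, g) \<in> set ineqs. linform I c x \<ge> g) \<and>
              (\<forall>(c, r, n) \<in> set congs. modZ Z n (linform I c x) (of_int r))}"
begin

lemma finite_I: "finite I"
  using I_subset finite_subset by blast

lemma A_subset_Gamma_pow: "A \<subseteq> Gamma_pow Z m"
  unfolding A_eq F_Gamma_def by blast

lemma supp_A: "x \<in> A \<Longrightarrow> supp m x = I"
  unfolding A_eq F_Gamma_def by blast

lemma A_coord_in_zgroup:
  assumes "x \<in> A" "i \<in> I" shows "\<exists>w\<in>Z. x i = Some w"
proof -
  have "i \<in> {1..m}" using assms(2) I_subset by blast
  then have "x i \<in> Gamma Z" using A_subset_Gamma_pow assms(1) unfolding Gamma_pow_def by (metis PiE_mem subsetD)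
  moreover have "x i \<noteq> None" using supp_A[OF assms(1)] assms(2) unfolding supp_def by blast
  ultimately show ?thesis unfolding Gamma_def by blast
qed

lemma A_coord_None: "x \<in> A \<Longrightarrow> i \<in> {1..m} \<Longrightarrow> i \<notin> I \<Longrightarrow> x i = None"
  using supp_A unfolding supp_def by blast

lemma supp_clos_A_subset: "a \<in> clos Z m A \<Longrightarrow> supp m a \<subseteq> I"
  using supp_clos_subset[OF zgroup A_subset_Gamma_pow] supp_A by blast

text \<open>Moving a point of \<open>A\<close> by a multiple of \<open>modulus\<close> keeps all congruences.\<close>

definition modulus :: nat where
  "modulus = (\<Prod>(c, r, n)\<in>set congs. n)"

lemma modulus_pos: "1 \<le> modulus"
proof -
  have "0 < modulus" unfolding modulus_def using congs_range by (intro prod_pos) auto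
  then show ?thesis by simp
qed

lemma dvd_modulus: "(c, r, n) \<in> set congs \<Longrightarrow> n dvd modulus"
  unfolding modulus_def using dvd_prodI[of "set congs" "(c, r, n)" "\<lambda>(c, r, n). n"] by simp

definition recession_direction :: "nat set \<Rightarrow> (nat \<Rightarrow> int) \<Rightarrow> bool" where
  "recession_direction U v \<longleftrightarrow> (\<forall>i\<in>U. 1 \<le> v i) \<and> (\<forall>(c, g)\<in>set ineqs. 0 \<le> (\<Sum>i\<in>U. c i * v i))"

lemma recession_direction_on_support:
  assumes fin: "finite (W \<union> T)" and v: "\<forall>i\<in>W. 1 \<le> v i" "\<forall>i\<in>T. 0 \<le> v i"
    "\<forall>(c, g)\<in>set ineqs. 0 \<le> (\<Sum>i\<in>W \<union> T. c i * v i)"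
  shows "recession_direction (W \<union> {i \<in> T. v i \<noteq> 0}) v"
proof -
  have "(\<Sum>i\<in>W \<union> T. c i * v i) = (\<Sum>i\<in>W \<union> {i \<in> T. v i \<noteq> 0}. c i * v i)" for c
    using fin by (intro sum.mono_neutral_right) auto
  moreover have "\<forall>i\<in>W \<union> {i \<in> T. v i \<noteq> 0}. 1 \<le> v i" using v(1,2) by fastforce
  ultimately show ?thesis using v(3) unfolding recession_direction_def by auto
qed

definition translate :: "nat set \<Rightarrow> (nat \<Rightarrow> 'k) \<Rightarrow> (nat \<Rightarrow> 'k option) \<Rightarrow> nat \<Rightarrow> 'k option" where
  "translate U d x = (\<lambda>i. if i \<in> U then Some (the (x i) + d i) else x i)"

lemma linform_translate:
  assumes "U \<subseteq> I"
  shows "linform I c (translate U d x) = linform I c x + (\<Sum>i\<in>U. of_int (c i) * d i)"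
proof -
  have "linform I c (translate U d x)
      = (\<Sum>i\<in>I. of_int (c i) * the (x i) + (if i \<in> U then of_int (c i) * d i else 0))"
    unfolding linform_def translate_def by (intro sum.cong) (auto simp: algebra_simps)
  also have "\<dots> = linform I c x + (\<Sum>i\<in>I \<inter> U. of_int (c i) * d i)"
    unfolding linform_def sum.distrib using finite_I by (simp add: sum.inter_restrict)
  finally show ?thesis using assms by (simp add: Int_absorb1)
qed

lemma translate_in_F_Gamma:
  assumes x: "x \<in> A" and U: "U \<subseteq> I" and d: "\<And>i. i \<in> U \<Longrightarrow> d i \<in> Z"
  shows "translate U d x \<in> F_Gamma Z m I"
proof -
  have xG: "x \<in> PiE {1..m} (\<lambda>_. Gamma Z)" using x A_subset_Gamma_pow unfolding Gamma_pow_def by blast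
  have "translate U d x \<in> PiE {1..m} (\<lambda>_. Gamma Z)"
  proof (rule PiE_I)
    show "translate U d x i \<in> Gamma Z" if i: "i \<in> {1..m}" for i
    proof (cases "i \<in> U")
      case True
      obtain w where w: "w \<in> Z" "x i = Some w" using A_coord_in_zgroup[OF x] U True by blast
      have "w + d i \<in> Z" using zgroup_add[OF zgroup w(1) d[OF True]] .
      then show ?thesis using True w(2) unfolding translate_def Gamma_def by simp
    next
      case False
      then show ?thesis using PiE_mem[OF xG i] unfolding translate_def by simp
    qed
    show "translate U d x i = undefined" if "i \<notin> {1..m}" for i
      using that U I_subset PiE_arb[OF xG that] unfolding translate_def by auto
  qed
  moreover have "supp m (translate U d x) = I"
    using supp_A[OF x] U I_subset unfolding supp_def translate_def by auto
  ultimately show ?thesis unfolding F_Gamma_def Gamma_pow_def by blast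
qed

lemma translate_in_A:
  assumes x: "x \<in> A" and U: "U \<subseteq> I" and v: "recession_direction U v" and z: "z \<in> Z" "0 \<le> z"
  shows "translate U (\<lambda>i. of_int (int modulus * v i) * z) x \<in> A"
proof -
  define d where "d i = of_int (int modulus * v i) * z" for i
  have lin: "linform I c (translate U d x)
      = linform I c x + of_int (int modulus * (\<Sum>i\<in>U. c i * v i)) * z" for c
    unfolding linform_translate[OF U] d_def by (simp add: sum_distrib_left sum_distrib_right algebra_simps)
  have "translate U d x \<in> F_Gamma Z m I"
    unfolding d_def by (rule translate_in_F_Gamma[OF x U zgroup_of_int_mult[OF zgroup z(1)]])
  moreover have "g \<le> linform I c (translate U d x)" if "(c, g) \<in> set ineqs" for c g
  proof -
    have "g \<le> linform I c x" using x that unfolding A_eq by auto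
    moreover have "0 \<le> (\<Sum>i\<in>U. c i * v i)" using v that unfolding recession_direction_def by auto
    then have "0 \<le> int modulus * (\<Sum>i\<in>U. c i * v i)" by simp
    then have "(0::'k) \<le> of_int (int modulus * (\<Sum>i\<in>U. c i * v i))" by (simp only: of_int_0_le_iff)
    then have "0 \<le> of_int (int modulus * (\<Sum>i\<in>U. c i * v i)) * z" using z(2) by (rule mult_nonneg_nonneg)
    ultimately show ?thesis unfolding lin by simp
  qed
  moreover have "modZ Z n (linform I c (translate U d x)) (of_int r)" if cong: "(c, r, n) \<in> set congs" for c r n
  proof -
    obtain w where w: "w \<in> Z" "linform I c x - of_int r = of_nat n * w"
      using x cong unfolding A_eq modZ_def by auto
    obtain q where q: "modulus = n * q" using dvd_modulus[OF cong] by blast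
    have "linform I c (translate U d x) - of_int r
        = of_nat n * (w + of_int (int q * (\<Sum>i\<in>U. c i * v i)) * z)"
      unfolding lin using w(2) q by (simp add: algebra_simps)
    moreover have "w + of_int (int q * (\<Sum>i\<in>U. c i * v i)) * z \<in> Z"
      using zgroup_add[OF zgroup w(1) zgroup_of_int_mult[OF zgroup z(1)]] .
    ultimately show ?thesis unfolding modZ_def by blast
  qed
  ultimately show ?thesis unfolding A_eq d_def by blast
qed

lemma escape_along_direction:
  assumes x: "x \<in> A" and U: "U \<subseteq> I" and v: "recession_direction U v" and M: "M \<in> Z"
  shows "\<exists>x'\<in>A. (\<forall>i. i \<notin> U \<longrightarrow> x' i = x i) \<and> (\<forall>i\<in>U. \<exists>w. x' i = Some w \<and> M < w)"
proof -
  define z where "z = \<bar>M\<bar> + (\<Sum>i\<in>U. \<bar>the (x i)\<bar>) + 1"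
  have "(\<Sum>i\<in>U. \<bar>the (x i)\<bar>) \<in> Z"
    using A_coord_in_zgroup[OF x] U zgroup_abs[OF zgroup]
    by (intro zgroup_sum[OF zgroup]) fastforce
  then have z: "z \<in> Z" "0 \<le> z"
    unfolding z_def using zgroup_add[OF zgroup] zgroup_abs[OF zgroup M] zgroup_one[OF zgroup]
    by (auto intro!: sum_nonneg)
  have "M < the (x i) + of_int (int modulus * v i) * z" if "i \<in> U" for i
  proof -
    have "1 \<le> v i" using v that unfolding recession_direction_def by blast
    then have "1 \<le> int modulus * v i" using modulus_pos mult_mono[of 1 "int modulus" 1 "v i"] by simp
    then have "(1::'k) \<le> of_int (int modulus * v i)" by (simp only: of_int_1_le_iff)
    then have "z \<le> of_int (int modulus * v i) * z" using mult_right_mono[OF _ z(2)] by fastforce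
    moreover have "\<bar>the (x i)\<bar> \<le> (\<Sum>i\<in>U. \<bar>the (x i)\<bar>)"
      using finite_subset[OF U finite_I] that by (intro member_le_sum) auto
    ultimately show ?thesis unfolding z_def by linarith
  qed
  then show ?thesis using translate_in_A[OF x U v z]
    by (intro bexI[of _ "translate U (\<lambda>i. of_int (int modulus * v i) * z) x"])
      (auto simp: translate_def)
qed

lemma drop_direction_in_F_face:
  assumes x: "x \<in> A" and U: "U \<subseteq> I" and v: "recession_direction U v"
  shows "restrict (\<lambda>i. if i \<in> U then None else x i) {1..m} \<in> F_face Z m (I - U) A"
proof -
  let ?a = "restrict (\<lambda>i. if i \<in> U then None else x i) {1..m}"
  have "x i \<in> Omega Z" if "i \<in> {1..m}" for i
    using x A_subset_Gamma_pow Gamma_subset_Omega that unfolding Gamma_pow_def by (metis PiE_mem subsetD)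
  then have "?a \<in> PiE {1..m} (\<lambda>_. Omega Z)"
    unfolding restrict_PiE_iff by (simp add: Omega_def)
  moreover have "\<exists>x'\<in>A. \<forall>i\<in>{1..m}. approximates M (x' i) (?a i)" if M: "M \<in> Z" for M
  proof -
    obtain x' where x': "x' \<in> A" "\<forall>i. i \<notin> U \<longrightarrow> x' i = x i" "\<forall>i\<in>U. \<exists>w. x' i = Some w \<and> M < w"
      using escape_along_direction[OF x U v M] by blast
    have "approximates M (x' i) (?a i)" if "i \<in> {1..m}" for i
      using x'(2,3) that unfolding approximates_def by (cases "i \<in> U") auto
    then show ?thesis using x'(1) by blast
  qed
  ultimately have "?a \<in> clos Z m A" by (rule approximable_imp_clos[OF zgroup A_subset_Gamma_pow])
  moreover have "supp m ?a = I - U" using supp_A[OF x] U I_subset unfolding supp_def by auto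
  ultimately show ?thesis unfolding F_face_def by blast
qed

lemma direction_from_unbounded_points:
  assumes WT: "W \<union> T \<subseteq> I" and \<beta>: "\<forall>i\<in>I - (W \<union> T). \<beta> i \<in> Z"
    and points: "\<forall>M\<in>Z. \<exists>x\<in>A. (\<forall>i\<in>I - (W \<union> T). x i = Some (\<beta> i))
                   \<and> (\<forall>i\<in>W. M < the (x i)) \<and> (\<forall>i\<in>T. 0 \<le> the (x i))"
  shows "\<exists>U v. W \<subseteq> U \<and> U \<subseteq> W \<union> T \<and> recession_direction U v"
proof -
  define shift where "shift c = (\<Sum>i\<in>I - (W \<union> T). of_int (c i) * \<beta> i)" for c
  define G where "G = (\<lambda>(c, g). (c, g - shift c)) ` set ineqs"
  have fin: "finite W" "finite T" "finite G"
    using WT finite_subset[OF _ finite_I] unfolding G_def by auto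
  have GZ: "\<forall>(c, g)\<in>G. g \<in> Z"
  proof (clarify)
    fix c g assume "(c, g) \<in> G"
    then obtain g0 where "(c, g0) \<in> set ineqs" "g = g0 - shift c" unfolding G_def by auto
    moreover have "shift c \<in> Z"
      unfolding shift_def using \<beta> by (intro zgroup_sum[OF zgroup] zgroup_of_int_mult[OF zgroup]) auto
    ultimately show "g \<in> Z" using ineqs_in_zgroup zgroup_diff[OF zgroup] by auto
  qed
  have unbounded: "\<exists>u. feasible_beyond W T G M u" if M: "M \<in> Z" for M
  proof -
    obtain x where x: "x \<in> A" "\<forall>i\<in>I - (W \<union> T). x i = Some (\<beta> i)"
      "\<forall>i\<in>W. M < the (x i)" "\<forall>i\<in>T. 0 \<le> the (x i)"
      using points M by blast
    have "g - shift c \<le> lin_sum (W \<union> T) c (\<lambda>i. the (x i))" if "(c, g) \<in> set ineqs" for c g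
    proof -
      have "g \<le> linform I c x" using x(1) that unfolding A_eq by auto
      also have "linform I c x = lin_sum (W \<union> T) c (\<lambda>i. the (x i)) + shift c"
        unfolding linform_def lin_sum_def shift_def using x(2) WT finite_I
        by (simp add: sum.subset_diff[of "W \<union> T" I])
      finally show ?thesis by simp
    qed
    then show ?thesis using x(3,4) unfolding feasible_beyond_def G_def
      by (intro exI[of _ "\<lambda>i. the (x i)"]) (auto simp: less_imp_le)
  qed
  then obtain v where v: "\<forall>i\<in>W. 1 \<le> v i" "\<forall>i\<in>T. 0 \<le> v i" "\<forall>(c, g)\<in>G. 0 \<le> (\<Sum>i\<in>W \<union> T. c i * v i)"
    using integral_recession_direction[OF zgroup fin GZ ballI[OF unbounded]] by blast
  moreover have "\<forall>(c, g)\<in>set ineqs. 0 \<le> (\<Sum>i\<in>W \<union> T. c i * v i)"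
    using v(3) unfolding G_def by fastforce
  ultimately have "recession_direction (W \<union> {i \<in> T. v i \<noteq> 0}) v"
    using fin by (intro recession_direction_on_support) auto
  then show ?thesis by (intro exI[of _ "W \<union> {i \<in> T. v i \<noteq> 0}"] exI[of _ v]) auto
qed

lemma clos_recession_direction:
  assumes a: "a \<in> clos Z m A"
  shows "\<exists>v. recession_direction {i \<in> I. a i = None} v"
proof -
  let ?W = "{i \<in> I. a i = None}"
  have aI: "a i = Some (the (a i)) \<and> the (a i) \<in> Z" if "i \<in> I - ?W" for i
  proof -
    have i: "i \<in> {1..m}" "a i \<noteq> None" using that I_subset by auto
    then obtain q where "a i = Some q" by blast
    then show ?thesis using clos_coord_in_zgroup[OF zgroup A_subset_Gamma_pow a i(1)] by simp
  qed
  have "\<exists>x\<in>A. (\<forall>i\<in>I - (?W \<union> {}). x i = Some (the (a i)))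
      \<and> (\<forall>i\<in>?W. M < the (x i)) \<and> (\<forall>i\<in>{}. 0 \<le> the (x i))" if M: "M \<in> Z" for M
  proof -
    obtain x where x: "x \<in> A" "\<forall>i\<in>{1..m}. approximates M (x i) (a i)"
      using clos_imp_approximable[OF zgroup A_subset_Gamma_pow a M] by blast
    have "M < the (x i)" if "i \<in> ?W" for i
    proof -
      have i: "i \<in> I" "i \<in> {1..m}" "a i = None" using that I_subset by auto
      obtain w where "x i = Some w" using A_coord_in_zgroup[OF x(1) i(1)] by blast
      then show ?thesis using x(2) i unfolding approximates_def by auto
    qed
    moreover have "x i = Some (the (a i))" if "i \<in> I - ?W" for i
    proof -
      have "i \<in> {1..m}" "a i \<noteq> None" using that I_subset by auto
      then show ?thesis using x(2) aI[OF that] unfolding approximates_def by simp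
    qed
    ultimately show ?thesis using x(1) by blast
  qed
  then obtain U v where "?W \<subseteq> U" "U \<subseteq> ?W \<union> {}" "recession_direction U v"
    using direction_from_unbounded_points[of ?W "{}" "\<lambda>i. the (a i)"] aI by auto
  then show ?thesis by auto
qed

lemma socle_drop_eq:
  assumes x: "x \<in> A" and JI: "J \<subseteq> I" and b: "b \<in> extensional {1..m - 1}" "supp (m - 1) b = J - {m}"
    and approx: "\<forall>i\<in>{1..m - 1}. approximates 0 (socle m x i) (b i)"
  shows "socle m (restrict (\<lambda>i. if i \<in> I - J then None else x i) {1..m}) = b"
proof
  fix i
  show "socle m (restrict (\<lambda>i. if i \<in> I - J then None else x i) {1..m}) i = b i"
  proof (cases "i \<in> {1..m - 1}")
    case False
    then show ?thesis using b(1) unfolding socle_def extensional_def by auto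
  next
    case True
    then have i: "i \<in> {1..m}" "i \<noteq> m" by auto
    have "b i \<noteq> None \<longleftrightarrow> i \<in> J" using b(2) True i(2) unfolding supp_def by auto
    moreover have "b i \<noteq> None \<Longrightarrow> x i = b i"
      using approx True unfolding approximates_def socle_def by simp
    moreover have "i \<notin> I \<Longrightarrow> x i = None" using A_coord_None[OF x i(1)] .
    ultimately show ?thesis using True i JI unfolding socle_def by auto
  qed
qed

lemma socle_F_face:
  assumes ne: "F_face Z m J A \<noteq> {}"
  shows "socle m ` F_face Z m J A = F_face Z (m - 1) (J - {m}) (socle m ` A)"
proof
  show "socle m ` F_face Z m J A \<subseteq> F_face Z (m - 1) (J - {m}) (socle m ` A)"
    by (rule socle_F_face_subset[OF zgroup A_subset_Gamma_pow])
  obtain a0 where a0: "a0 \<in> clos Z m A" "supp m a0 = J" using ne unfolding F_face_def by blast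
  have JI: "J \<subseteq> I" using supp_clos_A_subset[OF a0(1)] a0(2) by blast
  have "{i \<in> I. a0 i = None} = I - J" using a0(2) I_subset unfolding supp_def by auto
  then obtain v where v: "recession_direction (I - J) v" using clos_recession_direction[OF a0(1)] by auto
  show "F_face Z (m - 1) (J - {m}) (socle m ` A) \<subseteq> socle m ` F_face Z m J A"
  proof
    fix b assume "b \<in> F_face Z (m - 1) (J - {m}) (socle m ` A)"
    then have b: "b \<in> clos Z (m - 1) (socle m ` A)" "supp (m - 1) b = J - {m}"
      unfolding F_face_def by auto
    have X: "socle m ` A \<subseteq> Gamma_pow Z (m - 1)" by (rule socle_image_Gamma_pow[OF A_subset_Gamma_pow])
    obtain x where x: "x \<in> A" "\<forall>i\<in>{1..m - 1}. approximates 0 (socle m x i) (b i)"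
      using clos_imp_approximable[OF zgroup X b(1) zgroup_zero[OF zgroup]] by blast
    have "b \<in> extensional {1..m - 1}"
      using b(1) clos_subset_Omega_pow[OF zgroup, of "m - 1"] unfolding PiE_def by blast
    then have "socle m (restrict (\<lambda>i. if i \<in> I - J then None else x i) {1..m}) = b"
      using socle_drop_eq[OF x(1) JI _ b(2) x(2)] by blast
    moreover have "restrict (\<lambda>i. if i \<in> I - J then None else x i) {1..m} \<in> F_face Z m J A"
      using drop_direction_in_F_face[OF x(1) _ v] JI by (simp add: Diff_Diff_Int Int_absorb1)
    ultimately show "b \<in> socle m ` F_face Z m J A" by blast
  qed
qed

lemma points_over_clos_socle:
  assumes nonneg: "nonneg m A" and b: "b \<in> clos Z (m - 1) (socle m ` A)" and M: "M \<in> Z"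
  defines "W \<equiv> {i \<in> I - {m}. b i = None}" and "T \<equiv> I \<inter> {m}"
  shows "\<exists>x\<in>A. (\<forall>i\<in>I - (W \<union> T). x i = Some (the (b i)))
           \<and> (\<forall>i\<in>W. M < the (x i)) \<and> (\<forall>i\<in>T. 0 \<le> the (x i))"
proof -
  have X: "socle m ` A \<subseteq> Gamma_pow Z (m - 1)" by (rule socle_image_Gamma_pow[OF A_subset_Gamma_pow])
  obtain x where x: "x \<in> A" "\<forall>i\<in>{1..m - 1}. approximates M (socle m x i) (b i)"
    using clos_imp_approximable[OF zgroup X b M] by blast
  have "x i = Some (the (b i))" if "i \<in> I - (W \<union> T)" for i
  proof -
    have "i \<in> {1..m - 1}" "b i \<noteq> None" using that I_subset unfolding W_def T_def by fastforce+
    then show ?thesis using x(2) unfolding approximates_def socle_def by auto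
  qed
  moreover have "M < the (x i)" if "i \<in> W" for i
  proof -
    have i: "i \<in> I" "i \<noteq> m" "b i = None" using that unfolding W_def by auto
    then have "i \<in> {1..m - 1}" using I_subset by fastforce
    moreover obtain w where "x i = Some w" using A_coord_in_zgroup[OF x(1) i(1)] by blast
    ultimately show ?thesis using x(2) i(3) unfolding approximates_def socle_def by auto
  qed
  moreover have "0 \<le> the (x i)" if "i \<in> T" for i
  proof -
    have i: "i \<in> I" "i \<in> {1..m}" using that I_subset unfolding T_def by auto
    obtain w where "x i = Some w" using A_coord_in_zgroup[OF x(1) i(1)] by blast
    then show ?thesis using nonneg x(1) i(2) unfolding nonneg_def by auto
  qed
  ultimately show ?thesis using x(1) by blast
qed

text \<open>Non-negativity is needed here: the last coordinate cannot run off to \<open>-\<infinity>\<close>, so along the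
  recession direction it either stays fixed or tends to \<open>+\<infinity>\<close>.\<close>

lemma F_face_over_clos_socle:
  assumes nonneg: "nonneg m A" and b: "b \<in> clos Z (m - 1) (socle m ` A)"
  shows "\<exists>J. F_face Z m J A \<noteq> {} \<and> J - {m} = supp (m - 1) b"
proof -
  have X: "socle m ` A \<subseteq> Gamma_pow Z (m - 1)" by (rule socle_image_Gamma_pow[OF A_subset_Gamma_pow])
  define W where "W = {i \<in> I - {m}. b i = None}"
  define T where "T = I \<inter> {m}"
  have WT: "W \<union> T \<subseteq> I" unfolding W_def T_def by blast
  have fixed: "the (b i) \<in> Z" if "i \<in> I - (W \<union> T)" for i
  proof -
    have "i \<in> {1..m - 1}" "b i \<noteq> None" using that I_subset unfolding W_def T_def by fastforce+
    then show ?thesis using clos_coord_in_zgroup[OF zgroup X b] by fastforce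
  qed
  have points: "\<exists>x\<in>A. (\<forall>i\<in>I - (W \<union> T). x i = Some (the (b i)))
      \<and> (\<forall>i\<in>W. M < the (x i)) \<and> (\<forall>i\<in>T. 0 \<le> the (x i))" if "M \<in> Z" for M
    using points_over_clos_socle[OF nonneg b that] unfolding W_def T_def .
  obtain U v where U: "W \<subseteq> U" "U \<subseteq> W \<union> T" "recession_direction U v"
    using direction_from_unbounded_points[OF WT ballI[OF fixed] ballI[OF points]] by blast
  obtain x0 where "x0 \<in> A" using clos_imp_approximable[OF zgroup X b zgroup_zero[OF zgroup]] by blast
  then have nonempty: "F_face Z m (I - U) A \<noteq> {}" using drop_direction_in_F_face U WT by blast
  have "supp (m - 1) y \<subseteq> I - {m}" if "y \<in> socle m ` A" for y
    using that supp_socle supp_A by auto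
  then have "supp (m - 1) b \<subseteq> I - {m}" by (rule supp_clos_subset[OF zgroup X _ b])
  moreover have "I - {m} \<subseteq> {1..m - 1}" using I_subset by fastforce
  ultimately have "supp (m - 1) b = (I - {m}) - W" unfolding W_def supp_def by auto
  also have "\<dots> = (I - U) - {m}" using U(1,2) unfolding T_def by auto
  finally show ?thesis using nonempty by blast
qed

lemma socle_of_face:
  assumes "is_face Z m A (F_face Z m J A)"
  shows "socle m ` F_face Z m J A = F_face Z (m - 1) (J - {m}) (socle m ` A)"
    and "is_face Z (m - 1) (socle m ` A) (F_face Z (m - 1) (J - {m}) (socle m ` A))"
  using assms socle_F_face unfolding is_face_def by (metis image_is_empty)+

lemma face_over_socle_face:
  assumes m: "1 \<le> m" and nonneg: "nonneg m A" and Y_face: "is_face Z (m - 1) (socle m ` A) Y"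
  shows "\<exists>J B. B = F_face Z m J A \<and> is_face Z m A B \<and> socle m ` B = Y
           \<and> (m \<notin> J \<longrightarrow> B = (\<lambda>y. y(m := None)) ` Y)
           \<and> (m \<in> J \<longrightarrow> B = {y(m := Some z) | y z. y \<in> Y \<and> z \<in> Z} \<inter> clos Z m A)"
proof -
  obtain J' b where Y: "Y = F_face Z (m - 1) J' (socle m ` A)"
    "b \<in> clos Z (m - 1) (socle m ` A)" "supp (m - 1) b = J'"
    using Y_face unfolding is_face_def F_face_def by blast
  then obtain J where J: "F_face Z m J A \<noteq> {}" "J - {m} = J'"
    using F_face_over_clos_socle[OF nonneg] by metis
  then have socle_eq: "socle m ` F_face Z m J A = Y" using socle_F_face Y(1) by blast
  have "is_face Z m A (F_face Z m J A)" using J(1) unfolding is_face_def by blast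
  moreover have "m \<notin> J \<Longrightarrow> F_face Z m J A = (\<lambda>y. y(m := None)) ` Y"
    using F_face_last_None[OF zgroup m, of J A] unfolding socle_eq .
  moreover have "m \<in> J \<Longrightarrow> F_face Z m J A = {y(m := Some z) | y z. y \<in> Y \<and> z \<in> Z} \<inter> clos Z m A"
    using F_face_last_finite[OF zgroup A_subset_Gamma_pow m, of J] unfolding socle_eq .
  ultimately show ?thesis using socle_eq by (intro exI[of _ J] exI[of _ "F_face Z m J A"]) blast
qed

end

theorem proposition3p7:
  fixes Z :: "'k::linordered_field set"
    and m :: nat and I :: "nat set" and A :: "(nat \<Rightarrow> 'k option) set"
  assumes "zgroup Z" and "m \<ge> 1" and "I \<subseteq> {1..m}"
    and "basic_presburger Z m I A"
  shows "(\<forall>J. is_face Z m A (F_face Z m J A) \<longrightarrow>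
            socle m ` F_face Z m J A = F_face Z (m - 1) (J - {m}) (socle m ` A)
          \<and> is_face Z (m - 1) (socle m ` A) (F_face Z (m - 1) (J - {m}) (socle m ` A)))
       \<and> (nonneg m A \<longrightarrow>
          (\<forall>Y. is_face Z (m - 1) (socle m ` A) Y \<longrightarrow>
             (\<exists>J B. B = F_face Z m J A \<and> is_face Z m A B \<and> socle m ` B = Y
                \<and> (m \<notin> J \<longrightarrow> B = (\<lambda>y. y(m := None)) ` Y)
                \<and> (m \<in> J \<longrightarrow> B = {y(m := Some z) | y z. y \<in> Y \<and> z \<in> Z} \<inter> clos Z m A))))"
proof -
  obtain ineqs congs where "basic_presburger_set Z m I ineqs congs A"
    using assms(1,3,4) unfolding basic_presburger_def basic_presburger_set_def by blast
  then interpret basic_presburger_set Z m I ineqs congs A .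
  show ?thesis using socle_of_face face_over_socle_face[OF assms(2)] by auto
qed

end
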